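(* Let $f,g$ be parking functions and $F_f^*,F_g^*$ the dual basis elements in the graded dual $\mathrm{PSym}^*$ (whose product is the transpose of the coproduct of $\mathrm{PSym}$). Then $$F_f^*\cdot F_g^*=\sum_{h:\ f\backslash g\ \le_P\ h\ \le_P\ f/g}F_h^*.$$
   Context: $\mathrm{PBT}_n$: planar binary trees with $n+1$ leaves, numbered left to right; $\mathrm{Des}(t)=\{1\le i\le n-1:\text{the }(i+1)\text{-st leaf is a right child}\}$. For $\sigma\in S_n$, $\mathrm{Des}(\sigma)=\{i:\sigma(i)>\sigma(i+1)\}$, $\mathrm{Inv}(\sigma)=\{(i,j):i<j,\sigma(i)>\sigma(j)\}$. A parking function of degree $n$ is a pair $(\sigma,t)\in S_n\times \mathrm{PBT}_n$ with $\mathrm{Des}(t)\subseteq\mathrm{Des}(\sigma)$. Weak order $\sigma\le_w\tau$ iff $\mathrm{Inv}(\sigma)\subseteq\mathrm{Inv}(\tau)$; Tamari order $\le_T$: reflexive–transitive closure of replacing a subtree $x(A,y(B,C))$ by $x(y(A,B),C)$. Parking order: $(\sigma,s)\le_P(\tau,t)$ iff $\sigma\le_w\tau$ and $s\le_T t$. Splitting of binary trees: for $0\le i\le n$, with $P$ the path from the root to leaf $i+1$, ${}^it$ (resp. $t^i$) is obtained by deleting at each node of $P$ the child strictly to the right (resp. left) of the path with its subtree and contracting nodes with one child. For $f=(\sigma,t)$, ${}^if=(\mathrm{std}(\sigma(1)\cdots\sigma(i)),{}^it)$ and $f^i=(\mathrm{std}(\sigma(i+1)\cdots\sigma(n)),t^i)$,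 where $\mathrm{std}$ replaces the letters of a word with distinct letters by $1,2,\dots$ preserving relative order. $\mathrm{PSym}$ has basis $\{F_f\}$ over parking functions with coproduct $\Delta(F_f)=\sum_{i=0}^{n}F_{{}^if}\otimes F_{f^i}$. For $f=(\sigma,s)$ of degree $n$ and $g=(\tau,t)$ of degree $m$: $f/g=((\sigma(1)+m)\cdots(\sigma(n)+m)\tau(1)\cdots\tau(m),\ s/t)$ and $f\backslash g=(\sigma(1)\cdots\sigma(n)(\tau(1)+n)\cdots(\tau(m)+n),\ s\backslash t)$, where for trees $s/t$ identifies the root of $s$ with the leftmost leaf of $t$, and $s\backslash t$ identifies the root of $t$ with the rightmost leaf of $s$. *)

theory Defs
  imports Main
begin

datatype btree = Leaf | Node btree btree

fun nodes :: "btree \<Rightarrow> nat" where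
  "nodes Leaf = 0"
| "nodes (Node l r) = nodes l + nodes r + 1"

text \<open>Directions of the leaves, left to right: True = the leaf is a right child.
  The argument is the direction of the current subtree (root counted as left).\<close>
fun leaf_dirs :: "bool \<Rightarrow> btree \<Rightarrow> bool list" where
  "leaf_dirs d Leaf = [d]"
| "leaf_dirs d (Node l r) = leaf_dirs False l @ leaf_dirs True r"

text \<open>Des(t) = {1 <= i <= n-1 : the (i+1)-st leaf is a right child};
  the (i+1)-st leaf has 0-based index i in the list.\<close>
definition tree_des :: "btree \<Rightarrow> nat set" where
  "tree_des t = {i. 1 \<le> i \<and> i + 1 \<le> nodes t \<and> leaf_dirs False t ! i}"

definition is_perm :: "nat list \<Rightarrow> bool" where
  "is_perm s \<longleftrightarrow> distinct s \<and> set s = {1..length s}"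

definition perm_des :: "nat list \<Rightarrow> nat set" where
  "perm_des s = {i. 1 \<le> i \<and> i < length s \<and> s ! (i - 1) > s ! i}"

definition perm_inv :: "nat list \<Rightarrow> (nat \<times> nat) set" where
  "perm_inv s = {(i, j). 1 \<le> i \<and> i < j \<and> j \<le> length s \<and> s ! (i - 1) > s ! (j - 1)}"

definition weak_le :: "nat list \<Rightarrow> nat list \<Rightarrow> bool" where
  "weak_le s t \<longleftrightarrow> length s = length t \<and> perm_inv s \<subseteq> perm_inv t"

definition std :: "nat list \<Rightarrow> nat list" where
  "std w = map (\<lambda>x. card {y \<in> set w. y < x} + 1) w"

inductive rot :: "btree \<Rightarrow> btree \<Rightarrow> bool" where
  rot_root: "rot (Node A (Node B C)) (Node (Node A B) C)"
| rot_left: "rot l l' \<Longrightarrow> rot (Node l r) (Node l' r)"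
| rot_right: "rot r r' \<Longrightarrow> rot (Node l r) (Node l r')"

definition tamari_le :: "btree \<Rightarrow> btree \<Rightarrow> bool" where
  "tamari_le = rot\<^sup>*\<^sup>*"

type_synonym pf = "nat list \<times> btree"

definition is_pf :: "pf \<Rightarrow> bool" where
  "is_pf f \<longleftrightarrow> is_perm (fst f) \<and> nodes (snd f) = length (fst f)
                \<and> tree_des (snd f) \<subseteq> perm_des (fst f)"

definition pf_deg :: "pf \<Rightarrow> nat" where
  "pf_deg f = length (fst f)"

definition parking_le :: "pf \<Rightarrow> pf \<Rightarrow> bool" where
  "parking_le f g \<longleftrightarrow> weak_le (fst f) (fst g) \<and> tamari_le (snd f) (snd g)"

text \<open>Left part ^i t and right part t^i along the path to leaf i+1
  (leaves indexed 0..n here, so leaf i+1 has index i).\<close>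
fun split_l :: "nat \<Rightarrow> btree \<Rightarrow> btree" where
  "split_l i Leaf = Leaf"
| "split_l i (Node l r) =
     (if i < nodes l + 1 then split_l i l else Node l (split_l (i - (nodes l + 1)) r))"

fun split_r :: "nat \<Rightarrow> btree \<Rightarrow> btree" where
  "split_r i Leaf = Leaf"
| "split_r i (Node l r) =
     (if i < nodes l + 1 then Node (split_r i l) r else split_r (i - (nodes l + 1)) r)"

definition pf_split_l :: "nat \<Rightarrow> pf \<Rightarrow> pf" where
  "pf_split_l i f = (std (take i (fst f)), split_l i (snd f))"

definition pf_split_r :: "nat \<Rightarrow> pf \<Rightarrow> pf" where
  "pf_split_r i f = (std (drop i (fst f)), split_r i (snd f))"

text \<open>s / t: root of s identified with leftmost leaf of t.\<close>
fun graft_over :: "btree \<Rightarrow> btree \<Rightarrow> btree" where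
  "graft_over s Leaf = s"
| "graft_over s (Node l r) = Node (graft_over s l) r"

text \<open>s \ t: root of t identified with rightmost leaf of s.\<close>
fun graft_under :: "btree \<Rightarrow> btree \<Rightarrow> btree" where
  "graft_under Leaf t = t"
| "graft_under (Node l r) t = Node l (graft_under r t)"

definition pf_over :: "pf \<Rightarrow> pf \<Rightarrow> pf" where
  "pf_over f g = (map (\<lambda>x. x + length (fst g)) (fst f) @ fst g, graft_over (snd f) (snd g))"

definition pf_under :: "pf \<Rightarrow> pf \<Rightarrow> pf" where
  "pf_under f g = (fst f @ map (\<lambda>x. x + length (fst f)) (fst g), graft_under (snd f) (snd g))"

text \<open>An element of PSym* is given by its coefficient function on the basis F*_h
  (h a parking function); values on non-parking-functions are irrelevant and kept 0.
  The product is the transpose of the coproduct of PSym: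
  (a . b)(h) = sum_{i=0}^{deg h} a(^i h) * b(h^i).\<close>
type_synonym psym_dual = "pf \<Rightarrow> int"

definition Fstar :: "pf \<Rightarrow> psym_dual" where
  "Fstar f = (\<lambda>h. if h = f then 1 else 0)"

definition dual_mult :: "psym_dual \<Rightarrow> psym_dual \<Rightarrow> psym_dual" where
  "dual_mult a b = (\<lambda>h. if is_pf h
      then (\<Sum>i\<in>{0..pf_deg h}. a (pf_split_l i h) * b (pf_split_r i h)) else 0)"

end

theory Submission
  imports Defs
begin

text \<open>The coefficient of F*_h in F*_f F*_g is 1 exactly when h splits at position deg f into
  f and g. The splitting acts on the two components separately. For trees, splitting at a fixed
  leaf is monotone for the Tamari order and every tree lies between the under- and the
  over-graft of its two halves; by antisymmetry the trees splitting into s and u are exactly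
  the Tamari interval from s \ u to s / u. For permutations, a word standardizes to \<sigma> and
  \<tau> on its two blocks iff its inversions inside the blocks are those of \<sigma> and \<tau>, and
  it may have arbitrary inversions across the blocks; this is the weak-order interval from
  \<sigma> \ \<tau> (no cross inversions) to \<sigma> / \<tau> (all cross inversions).\<close>

lemma nodes_rot: "rot t t' \<Longrightarrow> nodes t' = nodes t"
  by (induction rule: rot.induct) auto

lemma tamari_le_refl [simp]: "tamari_le t t"
  by (simp add: tamari_le_def)

lemma tamari_le_rot: "rot t t' \<Longrightarrow> tamari_le t t'"
  by (simp add: tamari_le_def)

lemma tamari_le_trans [trans]: "tamari_le a b \<Longrightarrow> tamari_le b c \<Longrightarrow> tamari_le a c"
  unfolding tamari_le_def by (rule rtranclp_trans)

lemma tamari_le_map: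
  assumes "\<And>t t'. rot t t' \<Longrightarrow> tamari_le (F t) (F t')" and "tamari_le t t'"
  shows "tamari_le (F t) (F t')"
  using assms(2)
  by (induction rule: rtranclp_induct[where r = rot, folded tamari_le_def, consumes 1])
    (auto intro: tamari_le_trans assms(1))

lemma tamari_le_Node_left: "tamari_le l l' \<Longrightarrow> tamari_le (Node l r) (Node l' r)"
  by (rule tamari_le_map) (simp_all add: tamari_le_rot rot_left)

lemma tamari_le_Node_right: "tamari_le r r' \<Longrightarrow> tamari_le (Node l r) (Node l r')"
  by (rule tamari_le_map) (simp_all add: tamari_le_rot rot_right)

text \<open>A rotation strictly increases the total size of all left subtrees, so the Tamari
  order is antisymmetric.\<close>

fun left_weight :: "btree \<Rightarrow> nat" where
  "left_weight Leaf = 0"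
| "left_weight (Node l r) = left_weight l + left_weight r + nodes l"

lemma left_weight_rot: "rot t t' \<Longrightarrow> left_weight t < left_weight t'"
  by (induction rule: rot.induct) (auto dest: nodes_rot)

lemma tamari_le_left_weight: "tamari_le t t' \<Longrightarrow> t = t' \<or> left_weight t < left_weight t'"
  unfolding tamari_le_def
  by (induction rule: rtranclp_induct) (auto dest: left_weight_rot)

lemma tamari_le_antisym: "tamari_le a b \<Longrightarrow> tamari_le b a \<Longrightarrow> a = b"
  using tamari_le_left_weight less_asym by blast

lemma rot_split_l: "rot t t' \<Longrightarrow> tamari_le (split_l i t) (split_l i t')"
proof (induction arbitrary: i rule: rot.induct)
  case (rot_left l l' r)
  then show ?case
    using nodes_rot[OF rot_left(1)] by (auto intro: tamari_le_Node_left tamari_le_rot)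
qed (auto simp: rot.rot_root tamari_le_rot tamari_le_Node_right)

lemma rot_split_r: "rot t t' \<Longrightarrow> tamari_le (split_r i t) (split_r i t')"
proof (induction arbitrary: i rule: rot.induct)
  case (rot_left l l' r)
  then show ?case
    using nodes_rot[OF rot_left(1)] by (auto intro: tamari_le_Node_left tamari_le_rot)
qed (auto simp: rot.rot_root tamari_le_rot tamari_le_Node_right)

lemma tamari_le_split_l: "tamari_le t t' \<Longrightarrow> tamari_le (split_l i t) (split_l i t')"
  by (rule tamari_le_map[where F = "split_l i", OF rot_split_l])

lemma tamari_le_split_r: "tamari_le t t' \<Longrightarrow> tamari_le (split_r i t) (split_r i t')"
  by (rule tamari_le_map[where F = "split_r i", OF rot_split_r])

lemma graft_under_Node_le: "tamari_le (graft_under s (Node a b)) (Node (graft_under s a) b)"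
proof (induction s)
  case (Node x y)
  have "tamari_le (graft_under (Node x y) (Node a b)) (Node x (Node (graft_under y a) b))"
    using Node.IH(2) by (simp add: tamari_le_Node_right)
  also have "tamari_le \<dots> (Node (graft_under (Node x y) a) b)"
    by (simp add: tamari_le_rot rot_root)
  finally show ?case .
qed simp

lemma graft_over_Node_ge: "tamari_le (Node a (graft_over b u)) (graft_over (Node a b) u)"
proof (induction u)
  case (Node x y)
  have "tamari_le (Node a (graft_over b (Node x y))) (Node (Node a (graft_over b x)) y)"
    by (simp add: tamari_le_rot rot_root)
  also have "tamari_le \<dots> (graft_over (Node a b) (Node x y))"
    using Node.IH(1) by (simp add: tamari_le_Node_left)
  finally show ?case .
qed simp

lemma graft_split_le:
  "tamari_le (graft_under (split_l i t) (split_r i t)) t"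
  "tamari_le t (graft_over (split_l i t) (split_r i t))"
proof (induction t arbitrary: i)
  case (Node l r)
  { case 1 show ?case
      using Node.IH(1)[of i] Node.IH(3)[of "i - Suc (nodes l)"]
      by (auto intro: tamari_le_trans[OF graft_under_Node_le] tamari_le_Node_left tamari_le_Node_right)
  next
    case 2 show ?case
      using Node.IH(2)[of i] Node.IH(4)[of "i - Suc (nodes l)"]
      by (auto intro: tamari_le_trans[OF _ graft_over_Node_ge] tamari_le_Node_left tamari_le_Node_right) }
qed simp_all

lemma split_l_0 [simp]: "split_l 0 t = Leaf"
  by (induction t) auto

lemma split_r_0 [simp]: "split_r 0 t = t"
  by (induction t) auto

lemma split_l_beyond: "nodes t \<le> i \<Longrightarrow> split_l i t = t"
  by (induction t arbitrary: i) auto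

lemma split_r_beyond: "nodes t \<le> i \<Longrightarrow> split_r i t = Leaf"
  by (induction t arbitrary: i) auto

lemma split_graft_under:
  "split_l (nodes s) (graft_under s u) = s" "split_r (nodes s) (graft_under s u) = u"
  by (induction s) auto

lemma nodes_graft_over: "nodes (graft_over s u) = nodes s + nodes u"
  by (induction u) auto

lemma split_graft_over:
  "split_l (nodes s) (graft_over s u) = s" "split_r (nodes s) (graft_over s u) = u"
  by (induction u) (auto simp: split_l_beyond split_r_beyond nodes_graft_over)

theorem split_eq_iff_tamari_interval:
  "split_l (nodes s) t = s \<and> split_r (nodes s) t = u \<longleftrightarrow>
   tamari_le (graft_under s u) t \<and> tamari_le t (graft_over s u)"
proof
  assume "split_l (nodes s) t = s \<and> split_r (nodes s) t = u"
  then show "tamari_le (graft_under s u) t \<and> tamari_le t (graft_over s u)"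
    using graft_split_le[where i = "nodes s" and t = t] by simp
next
  assume "tamari_le (graft_under s u) t \<and> tamari_le t (graft_over s u)"
  then have "tamari_le s (split_l (nodes s) t)" "tamari_le (split_l (nodes s) t) s"
    "tamari_le u (split_r (nodes s) t)" "tamari_le (split_r (nodes s) t) u"
    using tamari_le_split_l[where i = "nodes s"] tamari_le_split_r[where i = "nodes s"]
      split_graft_under split_graft_over by metis+
  then show "split_l (nodes s) t = s \<and> split_r (nodes s) t = u"
    using tamari_le_antisym by blast
qed

lemma card_less_lt_card_less_iff:
  fixes a b :: "'a :: linorder"
  assumes "finite A" "a \<in> A" "b \<in> A"
  shows "card {y \<in> A. y < a} < card {y \<in> A. y < b} \<longleftrightarrow> a < b"
proof
  assume "a < b"
  then have "{y \<in> A. y < a} \<subset> {y \<in> A. y < b}"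
    using assms(2) by auto
  then show "card {y \<in> A. y < a} < card {y \<in> A. y < b}"
    using assms(1) by (simp add: psubset_card_mono)
next
  assume "card {y \<in> A. y < a} < card {y \<in> A. y < b}"
  moreover have "\<not> a < b \<Longrightarrow> card {y \<in> A. y < b} \<le> card {y \<in> A. y < a}"
    using assms(1) by (intro card_mono) auto
  ultimately show "a < b" by linarith
qed

lemma card_less_conv_nth:
  assumes "distinct w"
  shows "card {y \<in> set w. y < x} = card {j. j < length w \<and> w ! j < x}"
proof -
  have "{y \<in> set w. y < x} = (!) w ` {j. j < length w \<and> w ! j < x}"
    by (auto simp: in_set_conv_nth)
  moreover have "inj_on ((!) w) {j. j < length w \<and> w ! j < x}"
    using assms by (auto simp: inj_on_def nth_eq_iff_index_eq)
  ultimately show ?thesis by (simp add: card_image)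
qed

lemma length_std [simp]: "length (std w) = length w"
  by (simp add: std_def)

lemma std_nth_rank:
  "distinct w \<Longrightarrow> i < length w \<Longrightarrow> std w ! i = card {j. j < length w \<and> w ! j < w ! i} + 1"
  by (simp add: std_def card_less_conv_nth)

lemma std_nth_less_iff:
  "i < length w \<Longrightarrow> j < length w \<Longrightarrow> std w ! i < std w ! j \<longleftrightarrow> w ! i < w ! j"
  by (simp add: std_def card_less_lt_card_less_iff)

lemma std_perm: "is_perm p \<Longrightarrow> std p = p"
proof -
  assume "is_perm p"
  then have "card {y \<in> set p. y < x} + 1 = x" if "x \<in> set p" for x
  proof -
    have "{y \<in> set p. y < x} = {1..<x}" and "x \<ge> 1"
      using \<open>is_perm p\<close> that by (auto simp: is_perm_def)
    then show ?thesis by simp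
  qed
  then show "std p = p"
    by (simp add: std_def map_idI)
qed

lemma perm_inv_subset_iff:
  assumes "length a = N" "length b = N"
  shows "perm_inv a \<subseteq> perm_inv b \<longleftrightarrow>
    (\<forall>i j. i < j \<longrightarrow> j < N \<longrightarrow> a ! j < a ! i \<longrightarrow> b ! j < b ! i)"
proof
  assume sub: "perm_inv a \<subseteq> perm_inv b"
  show "\<forall>i j. i < j \<longrightarrow> j < N \<longrightarrow> a ! j < a ! i \<longrightarrow> b ! j < b ! i"
  proof (intro allI impI)
    fix i j assume "i < j" "j < N" "a ! j < a ! i"
    then have "(Suc i, Suc j) \<in> perm_inv a"
      using assms by (simp add: perm_inv_def)
    then have "(Suc i, Suc j) \<in> perm_inv b"
      using sub by blast
    then show "b ! j < b ! i" by (simp add: perm_inv_def)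
  qed
next
  assume "\<forall>i j. i < j \<longrightarrow> j < N \<longrightarrow> a ! j < a ! i \<longrightarrow> b ! j < b ! i"
  then show "perm_inv a \<subseteq> perm_inv b"
    using assms by (fastforce simp: perm_inv_def)
qed

lemma perm_inv_eq_iff:
  assumes "length a = N" "length b = N"
  shows "perm_inv a = perm_inv b \<longleftrightarrow>
    (\<forall>i j. i < j \<longrightarrow> j < N \<longrightarrow> (a ! j < a ! i \<longleftrightarrow> b ! j < b ! i))"
  using perm_inv_subset_iff[OF assms] perm_inv_subset_iff[OF assms(2,1)] by blast

lemma perm_inv_std: "perm_inv (std w) = perm_inv w"
  by (subst perm_inv_eq_iff[where N = "length w"]) (auto simp: std_nth_less_iff)

lemma std_eq_iff_perm_inv:
  assumes w: "distinct w" and p: "is_perm p" and len: "length w = length p"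
  shows "std w = p \<longleftrightarrow> perm_inv w = perm_inv p"
proof
  assume "std w = p"
  then show "perm_inv w = perm_inv p" by (metis perm_inv_std)
next
  assume "perm_inv w = perm_inv p"
  then have inv: "w ! j < w ! i \<longleftrightarrow> p ! j < p ! i" if "i < j" "j < length w" for i j
    using that perm_inv_eq_iff[OF refl len[symmetric]] by blast
  have dp: "distinct p" using p by (simp add: is_perm_def)
  have order: "w ! j < w ! i \<longleftrightarrow> p ! j < p ! i" if "i < length w" "j < length w" for i j
  proof (cases i j rule: linorder_cases)
    case greater
    have "w ! i \<noteq> w ! j" "p ! i \<noteq> p ! j"
      using w dp that len greater by (simp_all add: nth_eq_iff_index_eq)
    then show ?thesis using inv[OF greater that(1)] by auto
  qed (use inv that in auto)
  have "std w ! i = std p ! i" if "i < length w" for i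
  proof -
    have "{j. j < length w \<and> w ! j < w ! i} = {j. j < length p \<and> p ! j < p ! i}"
      using order that len by auto
    then show ?thesis
      using that w dp len by (simp add: std_nth_rank)
  qed
  then show "std w = p"
    using len std_perm[OF p] by (auto intro: nth_equalityI)
qed

lemma all_pairs_below_add_iff:
  fixes P :: "nat \<Rightarrow> nat \<Rightarrow> bool"
  shows "(\<forall>i j. i < j \<longrightarrow> j < n + m \<longrightarrow> P i j) \<longleftrightarrow>
   (\<forall>i j. i < j \<longrightarrow> j < n \<longrightarrow> P i j) \<and>
   (\<forall>i j. i < j \<longrightarrow> j < m \<longrightarrow> P (n + i) (n + j)) \<and>
   (\<forall>i<n. \<forall>j<m. P i (n + j))"
proof (intro iffI allI impI; (elim conjE)?)
  fix i j assume "i < j" "j < n + m"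
    and P1: "\<forall>i j. i < j \<longrightarrow> j < n \<longrightarrow> P i j"
    and P2: "\<forall>i j. i < j \<longrightarrow> j < m \<longrightarrow> P (n + i) (n + j)"
    and P3: "\<forall>i<n. \<forall>j<m. P i (n + j)"
  consider "j < n" | "n \<le> i" | "i < n" "n \<le> j" by linarith
  then show "P i j"
  proof cases
    case 2
    then show ?thesis
      using P2[rule_format, of "i - n" "j - n"] \<open>i < j\<close> \<open>j < n + m\<close> by simp
  next
    case 3
    then show ?thesis
      using P3[rule_format, of i "j - n"] \<open>j < n + m\<close> by simp
  qed (use P1 \<open>i < j\<close> in blast)
qed auto

lemma perm_inv_between_shifted_sums_iff:
  assumes \<sigma>: "is_perm \<sigma>" "length \<sigma> = n" and \<tau>: "is_perm \<tau>" "length \<tau> = m"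
    and w: "length w = n + m"
  shows "perm_inv (\<sigma> @ map (\<lambda>x. x + n) \<tau>) \<subseteq> perm_inv w \<and>
         perm_inv w \<subseteq> perm_inv (map (\<lambda>x. x + m) \<sigma> @ \<tau>) \<longleftrightarrow>
         perm_inv (take n w) = perm_inv \<sigma> \<and> perm_inv (drop n w) = perm_inv \<tau>"
proof -
  define a where "a = \<sigma> @ map (\<lambda>x. x + n) \<tau>"
  define b where "b = map (\<lambda>x. x + m) \<sigma> @ \<tau>"
  have la: "length a = n + m" and lb: "length b = n + m"
    using \<sigma> \<tau> by (simp_all add: a_def b_def)
  have \<sigma>_range: "1 \<le> \<sigma> ! i \<and> \<sigma> ! i \<le> n" if "i < n" for i
    using \<sigma> that nth_mem[of i \<sigma>] by (auto simp: is_perm_def)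
  have \<tau>_range: "1 \<le> \<tau> ! j \<and> \<tau> ! j \<le> m" if "j < m" for j
    using \<tau> that nth_mem[of j \<tau>] by (auto simp: is_perm_def)
  let ?between = "\<lambda>i j. (a ! j < a ! i \<longrightarrow> w ! j < w ! i) \<and> (w ! j < w ! i \<longrightarrow> b ! j < b ! i)"
  have "perm_inv a \<subseteq> perm_inv w \<and> perm_inv w \<subseteq> perm_inv b \<longleftrightarrow>
      (\<forall>i j. i < j \<longrightarrow> j < n + m \<longrightarrow> ?between i j)"
    unfolding perm_inv_subset_iff[OF la w] perm_inv_subset_iff[OF w lb] by blast
  also have "\<dots> \<longleftrightarrow>
      (\<forall>i j. i < j \<longrightarrow> j < n \<longrightarrow> (w ! j < w ! i \<longleftrightarrow> \<sigma> ! j < \<sigma> ! i)) \<and>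
      (\<forall>i j. i < j \<longrightarrow> j < m \<longrightarrow> (w ! (n + j) < w ! (n + i) \<longleftrightarrow> \<tau> ! j < \<tau> ! i))"
  proof -
    have block1: "?between i j \<longleftrightarrow> (w ! j < w ! i \<longleftrightarrow> \<sigma> ! j < \<sigma> ! i)" if "i < j" "j < n" for i j
      using that \<sigma> by (auto simp: a_def b_def nth_append)
    have block2: "?between (n + i) (n + j) \<longleftrightarrow> (w ! (n + j) < w ! (n + i) \<longleftrightarrow> \<tau> ! j < \<tau> ! i)"
      if "i < j" "j < m" for i j
      using that \<sigma> \<tau> by (auto simp: a_def b_def nth_append)
    have cross: "?between i (n + j) \<longleftrightarrow> True" if "i < n" "j < m" for i j
      using that \<sigma> \<tau> \<sigma>_range[OF that(1)] \<tau>_range[OF that(2)] by (auto simp: a_def b_def nth_append)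
    show ?thesis
      unfolding all_pairs_below_add_iff by (simp only: block1 block2 cross simp_thms cong: imp_cong)
  qed
  also have "\<dots> \<longleftrightarrow> perm_inv (take n w) = perm_inv \<sigma> \<and> perm_inv (drop n w) = perm_inv \<tau>"
    using \<sigma> \<tau> w by (simp add: perm_inv_eq_iff[where N = n] perm_inv_eq_iff[where N = m])
  finally show ?thesis by (simp add: a_def b_def)
qed

lemma std_split_eq_iff_weak_interval:
  assumes \<sigma>: "is_perm \<sigma>" and \<tau>: "is_perm \<tau>"
    and w: "distinct w" "length w = length \<sigma> + length \<tau>"
  shows "std (take (length \<sigma>) w) = \<sigma> \<and> std (drop (length \<sigma>) w) = \<tau> \<longleftrightarrow>
    weak_le (\<sigma> @ map (\<lambda>x. x + length \<sigma>) \<tau>) w \<and> weak_le w (map (\<lambda>x. x + length \<tau>) \<sigma> @ \<tau>)"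
  using w std_eq_iff_perm_inv[OF _ \<sigma>, of "take (length \<sigma>) w"]
    std_eq_iff_perm_inv[OF _ \<tau>, of "drop (length \<sigma>) w"]
    perm_inv_between_shifted_sums_iff[OF \<sigma> refl \<tau> refl w(2)]
  by (simp add: weak_le_def)

lemma dual_mult_Fstar_Fstar:
  assumes "is_pf h"
  shows "dual_mult (Fstar f) (Fstar g) h =
    (if pf_split_l (pf_deg f) h = f \<and> pf_split_r (pf_deg f) h = g then 1 else 0)"
proof -
  let ?split_eq = "\<lambda>i. pf_split_l i h = f \<and> pf_split_r i h = g"
  have deg: "pf_deg f = min i (pf_deg h)" if "pf_split_l i h = f" for i
    using arg_cong[OF that, of pf_deg] by (simp add: pf_split_l_def pf_deg_def)
  have summand: "Fstar f (pf_split_l i h) * Fstar g (pf_split_r i h) =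
      (if i = pf_deg f then if ?split_eq i then 1 else 0 else 0)" if "i \<in> {0..pf_deg h}" for i
  proof (cases "i = pf_deg f")
    case False
    then have "pf_split_l i h \<noteq> f" using deg[of i] that by auto
    then show ?thesis using False by (simp add: Fstar_def)
  qed (simp add: Fstar_def)
  have "dual_mult (Fstar f) (Fstar g) h =
      (\<Sum>i\<in>{0..pf_deg h}. Fstar f (pf_split_l i h) * Fstar g (pf_split_r i h))"
    using assms by (simp add: dual_mult_def)
  also have "\<dots> = (\<Sum>i\<in>{0..pf_deg h}. if i = pf_deg f then if ?split_eq i then 1 else 0 else 0)"
    using summand by (rule sum.cong[OF refl])
  also have "\<dots> = (if ?split_eq (pf_deg f) then 1 else 0)"
    using deg[of "pf_deg f"] by (auto simp: sum.delta)
  finally show ?thesis .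
qed

lemma pf_split_eq_iff_parking_interval:
  assumes "is_pf f" "is_pf g" "is_pf h"
  shows "pf_split_l (pf_deg f) h = f \<and> pf_split_r (pf_deg f) h = g \<longleftrightarrow>
    parking_le (pf_under f g) h \<and> parking_le h (pf_over f g)"
proof -
  obtain \<sigma> s \<tau> u w t where fgh: "f = (\<sigma>, s)" "g = (\<tau>, u)" "h = (w, t)"
    by (metis prod.exhaust)
  have \<sigma>: "is_perm \<sigma>" "nodes s = length \<sigma>" and \<tau>: "is_perm \<tau>" "nodes u = length \<tau>"
    and w: "distinct w"
    using assms by (simp_all add: fgh is_pf_def is_perm_def)
  have take_length: "length \<sigma> \<le> length w" if "std (take (length \<sigma>) w) = \<sigma>"
    using arg_cong[OF that, of length] by simp
  have split_iff: "pf_split_l (pf_deg f) h = f \<and> pf_split_r (pf_deg f) h = g \<longleftrightarrow>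
      length w = length \<sigma> + length \<tau> \<and>
      (std (take (length \<sigma>) w) = \<sigma> \<and> std (drop (length \<sigma>) w) = \<tau>) \<and>
      (split_l (nodes s) t = s \<and> split_r (nodes s) t = u)"
    using take_length by (auto simp: fgh \<sigma> pf_split_l_def pf_split_r_def pf_deg_def)
  have interval_iff: "parking_le (pf_under f g) h \<and> parking_le h (pf_over f g) \<longleftrightarrow>
      length w = length \<sigma> + length \<tau> \<and>
      (weak_le (\<sigma> @ map (\<lambda>x. x + length \<sigma>) \<tau>) w \<and> weak_le w (map (\<lambda>x. x + length \<tau>) \<sigma> @ \<tau>)) \<and>
      (tamari_le (graft_under s u) t \<and> tamari_le t (graft_over s u))"
    by (auto simp: fgh pf_under_def pf_over_def parking_le_def weak_le_def)
  show ?thesis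
    unfolding split_iff interval_iff
    using std_split_eq_iff_weak_interval[OF \<sigma>(1) \<tau>(1) w] split_eq_iff_tamari_interval
    by blast
qed

theorem mainTheorem13:
  assumes "is_pf f" and "is_pf g"
  shows "dual_mult (Fstar f) (Fstar g) =
    (\<lambda>h. if is_pf h \<and> parking_le (pf_under f g) h \<and> parking_le h (pf_over f g)
         then 1 else 0)"
proof
  fix h
  show "dual_mult (Fstar f) (Fstar g) h =
    (if is_pf h \<and> parking_le (pf_under f g) h \<and> parking_le h (pf_over f g) then 1 else 0)"
  proof (cases "is_pf h")
    case True
    then show ?thesis
      using assms by (simp add: dual_mult_Fstar_Fstar pf_split_eq_iff_parking_interval)
  qed (simp add: dual_mult_def)
qed

end
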